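(* If $\Gamma\Vdash t:A$ is derivable in the type system $\lambda 2^{la}$, then $t$ is strongly normalising (for the reduction $\to$ of Lineal).
   Context: Fix a commutative ring $(\mathcal{S},+,\times)$ of scalars. Terms of the linear-algebraic $\lambda$-calculus (Lineal): $t,r,u ::= b \mid (t)\,r \mid \mathbf{0} \mid \alpha.t \mid t+r$, with basis terms $b ::= x \mid \lambda x\,t$. Terms are considered modulo associativity and commutativity of $+$. Substitution $t[b/x]$ is capture-avoiding, with $(\alpha.t+\beta.u)[b/x]=\alpha.(t[b/x])+\beta.(u[b/x])$. One-step reduction $\to$ is the closure under term contexts (modulo AC of $+$) of: $t+\mathbf 0\to t$; $0.t\to\mathbf 0$; $1.t\to t$; $\alpha.\mathbf 0\to\mathbf 0$; $\alpha.(\beta.t)\to(\alpha\times\beta).t$; $\alpha.(t+r)\to\alpha.t+\alpha.r$; $\alpha.t+\beta.t\to(\alpha+\beta).t$, $\alpha.t+t\to(\alpha+1).t$, $t+t\to(1+1).t$ (only if $t$ is a closed normal term); $(t+r)\,u\to(t)\,u+(r)\,u$ and $(u)\,(t+r)\to(u)\,t+(u)\,r$ (only if $t+r$ is a closed normal term); $(\alpha.t)\,r\to\alpha.(t)\,r$ and $(r)\,(\alpha.t)\to\alpha.(r)\,t$ (only if $t$ is a closed normal term); $(\mathbf 0)\,t\to\mathbf 0$; $(t)\,\mathbf 0\to\mathbf 0$; $(\lambda x\,t)\,b\to t[b/x]$ (only if $b$ is a basis term). The type system $\lambda 2^{la}$ has types $A,B ::= X \mid A\to B \mid \forall X.A$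 and contexts $\Gamma$ assigning such types to distinct term variables. Its rules are those of System F: $\Gamma,x:A\Vdash x:A$; from $\Gamma,x:A\Vdash t:B$ infer $\Gamma\Vdash\lambda x\,t:A\to B$; from $\Gamma\Vdash t:A\to B$ and $\Gamma\Vdash r:A$ infer $\Gamma\Vdash (t)\,r:B$; from $\Gamma\Vdash t:\forall X.A$ infer $\Gamma\Vdash t:A[B/X]$; from $\Gamma\Vdash t:A$ with $X$ not free in $\Gamma$ infer $\Gamma\Vdash t:\forall X.A$; together with: $\Gamma\Vdash\mathbf 0:A$ for any $A$; from $\Gamma\Vdash t:A$ and $\Gamma\Vdash r:A$ infer $\Gamma\Vdash t+r:A$; from $\Gamma\Vdash t:A$ infer $\Gamma\Vdash\alpha.t:A$ for any $\alpha\in\mathcal S$. *)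

theory Defs
  imports Main
begin

datatype ty = TVar nat | Arr ty ty | All ty

fun liftT :: "nat \<Rightarrow> ty \<Rightarrow> ty" where
  "liftT k (TVar i) = (if i < k then TVar i else TVar (Suc i))"
| "liftT k (Arr A B) = Arr (liftT k A) (liftT k B)"
| "liftT k (All A) = All (liftT (Suc k) A)"

fun substT :: "ty \<Rightarrow> nat \<Rightarrow> ty \<Rightarrow> ty" where
  "substT (TVar i) k B = (if i < k then TVar i else if i = k then B else TVar (i - 1))"
| "substT (Arr A C) k B = Arr (substT A k B) (substT C k B)"
| "substT (All A) k B = All (substT A (Suc k) (liftT 0 B))"

datatype 's tm = Var nat | Lam "'s tm" | App "'s tm" "'s tm" | Zero
  | Scal 's "'s tm" | Plus "'s tm" "'s tm"

fun basis :: "'s tm \<Rightarrow> bool" where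
  "basis (Var i) = True"
| "basis (Lam t) = True"
| "basis _ = False"

fun lift :: "'s tm \<Rightarrow> nat \<Rightarrow> 's tm" where
  "lift (Var i) k = (if i < k then Var i else Var (Suc i))"
| "lift (Lam t) k = Lam (lift t (Suc k))"
| "lift (App t r) k = App (lift t k) (lift r k)"
| "lift Zero k = Zero"
| "lift (Scal a t) k = Scal a (lift t k)"
| "lift (Plus t r) k = Plus (lift t k) (lift r k)"

fun subst :: "'s tm \<Rightarrow> 's tm \<Rightarrow> nat \<Rightarrow> 's tm" where
  "subst (Var i) s k = (if k < i then Var (i - 1) else if i = k then s else Var i)"
| "subst (Lam t) s k = Lam (subst t (lift s 0) (Suc k))"
| "subst (App t r) s k = App (subst t s k) (subst r s k)"
| "subst Zero s k = Zero"
| "subst (Scal a t) s k = Scal a (subst t s k)"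
| "subst (Plus t r) s k = Plus (subst t s k) (subst r s k)"

fun closedAt :: "nat \<Rightarrow> 's tm \<Rightarrow> bool" where
  "closedAt k (Var i) = (i < k)"
| "closedAt k (Lam t) = closedAt (Suc k) t"
| "closedAt k (App t r) = (closedAt k t \<and> closedAt k r)"
| "closedAt k Zero = True"
| "closedAt k (Scal a t) = closedAt k t"
| "closedAt k (Plus t r) = (closedAt k t \<and> closedAt k r)"

definition closed :: "'s tm \<Rightarrow> bool" where
  "closed t = closedAt 0 t"

fun tsize :: "'s tm \<Rightarrow> nat" where
  "tsize (Var i) = 1"
| "tsize (Lam t) = Suc (tsize t)"
| "tsize (App t r) = Suc (tsize t + tsize r)"
| "tsize Zero = 1"
| "tsize (Scal a t) = Suc (tsize t)"
| "tsize (Plus t r) = Suc (tsize t + tsize r)"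

inductive ac :: "'s tm \<Rightarrow> 's tm \<Rightarrow> bool" where
  ac_refl: "ac t t"
| ac_sym: "ac t r \<Longrightarrow> ac r t"
| ac_trans: "ac t r \<Longrightarrow> ac r u \<Longrightarrow> ac t u"
| ac_assoc: "ac (Plus (Plus t r) u) (Plus t (Plus r u))"
| ac_comm: "ac (Plus t r) (Plus r t)"
| ac_Lam: "ac t r \<Longrightarrow> ac (Lam t) (Lam r)"
| ac_App: "ac t t' \<Longrightarrow> ac r r' \<Longrightarrow> ac (App t r) (App t' r')"
| ac_Scal: "ac t r \<Longrightarrow> ac (Scal a t) (Scal a r)"
| ac_Plus: "ac t t' \<Longrightarrow> ac r r' \<Longrightarrow> ac (Plus t r) (Plus t' r')"

section \<open>Reduction, parametrised by the predicate P = "is a closed normal term"\<close>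

inductive head_red :: "('s::comm_ring_1 tm \<Rightarrow> bool) \<Rightarrow> 's tm \<Rightarrow> 's tm \<Rightarrow> bool"
  for P where
  r_plus0: "head_red P (Plus t Zero) t"
| r_scal0: "head_red P (Scal 0 t) Zero"
| r_scal1: "head_red P (Scal 1 t) t"
| r_scalZ: "head_red P (Scal a Zero) Zero"
| r_scalscal: "head_red P (Scal a (Scal b t)) (Scal (a * b) t)"
| r_scalplus: "head_red P (Scal a (Plus t r)) (Plus (Scal a t) (Scal a r))"
| r_fact: "P t \<Longrightarrow> head_red P (Plus (Scal a t) (Scal b t)) (Scal (a + b) t)"
| r_fact1: "P t \<Longrightarrow> head_red P (Plus (Scal a t) t) (Scal (a + 1) t)"
| r_fact2: "P t \<Longrightarrow> head_red P (Plus t t) (Scal (1 + 1) t)"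
| r_distl: "P (Plus t r) \<Longrightarrow> head_red P (App (Plus t r) u) (Plus (App t u) (App r u))"
| r_distr: "P (Plus t r) \<Longrightarrow> head_red P (App u (Plus t r)) (Plus (App u t) (App u r))"
| r_scall: "P t \<Longrightarrow> head_red P (App (Scal a t) r) (Scal a (App t r))"
| r_scalr: "P t \<Longrightarrow> head_red P (App r (Scal a t)) (Scal a (App r t))"
| r_zerol: "head_red P (App Zero t) Zero"
| r_zeror: "head_red P (App t Zero) Zero"
| r_beta: "basis b \<Longrightarrow> head_red P (App (Lam t) b) (subst t b 0)"

inductive ctx_red :: "('s::comm_ring_1 tm \<Rightarrow> bool) \<Rightarrow> 's tm \<Rightarrow> 's tm \<Rightarrow> bool"
  for P where
  c_head: "head_red P t r \<Longrightarrow> ctx_red P t r"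
| c_Lam: "ctx_red P t r \<Longrightarrow> ctx_red P (Lam t) (Lam r)"
| c_AppL: "ctx_red P t r \<Longrightarrow> ctx_red P (App t u) (App r u)"
| c_AppR: "ctx_red P t r \<Longrightarrow> ctx_red P (App u t) (App u r)"
| c_Scal: "ctx_red P t r \<Longrightarrow> ctx_red P (Scal a t) (Scal a r)"
| c_PlusL: "ctx_red P t r \<Longrightarrow> ctx_red P (Plus t u) (Plus r u)"
| c_PlusR: "ctx_red P t r \<Longrightarrow> ctx_red P (Plus u t) (Plus u r)"

definition step :: "('s::comm_ring_1 tm \<Rightarrow> bool) \<Rightarrow> 's tm \<Rightarrow> 's tm \<Rightarrow> bool" where
  "step P t r = (\<exists>t' r'. ac t t' \<and> ctx_red P t' r' \<and> ac r' r)"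

text \<open>The side conditions of every rule only query "closed normal" for terms strictly
  smaller than the reducing term, so the (self-referential) definition is stratified by
  size: cnf_upto n decides "closed normal" correctly for all terms of size < n.\<close>
fun cnf_upto :: "nat \<Rightarrow> 's::comm_ring_1 tm \<Rightarrow> bool" where
  "cnf_upto 0 u = False"
| "cnf_upto (Suc n) u =
     (if tsize u < n then cnf_upto n u
      else tsize u = n \<and> closed u \<and> \<not> (\<exists>r. step (cnf_upto n) u r))"

definition closed_normal :: "'s::comm_ring_1 tm \<Rightarrow> bool" where
  "closed_normal u = cnf_upto (Suc (tsize u)) u"

definition red :: "'s::comm_ring_1 tm \<Rightarrow> 's tm \<Rightarrow> bool" where
  "red t r = step closed_normal t r"

definition SN :: "'s::comm_ring_1 tm \<Rightarrow> bool" where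
  "SN t = (\<not> (\<exists>f. f 0 = t \<and> (\<forall>i. red (f i) (f (Suc i)))))"

inductive typing :: "ty list \<Rightarrow> 's tm \<Rightarrow> ty \<Rightarrow> bool" where
  t_var: "i < length \<Gamma> \<Longrightarrow> typing \<Gamma> (Var i) (\<Gamma> ! i)"
| t_lam: "typing (A # \<Gamma>) t B \<Longrightarrow> typing \<Gamma> (Lam t) (Arr A B)"
| t_app: "typing \<Gamma> t (Arr A B) \<Longrightarrow> typing \<Gamma> r A \<Longrightarrow> typing \<Gamma> (App t r) B"
| t_allE: "typing \<Gamma> t (All A) \<Longrightarrow> typing \<Gamma> t (substT A 0 B)"
| t_allI: "typing (map (liftT 0) \<Gamma>) t A \<Longrightarrow> typing \<Gamma> t (All A)"
| t_zero: "typing \<Gamma> Zero A"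
| t_plus: "typing \<Gamma> t A \<Longrightarrow> typing \<Gamma> r A \<Longrightarrow> typing \<Gamma> (Plus t r) A"
| t_scal: "typing \<Gamma> t A \<Longrightarrow> typing \<Gamma> (Scal a t) A"

end

theory Submission
  imports Defs "HOL-Library.Multiset"
begin

text \<open>Strong normalisation is shown for the larger relation without side conditions, by
  reducibility candidates adapted to linear combinations. Besides the usual closure
  properties, a candidate is required to be determined by its leaves, the summands at the
  top of a term that are neither sums, scalings nor \<open>0\<close>; hence candidates contain \<open>0\<close> and
  are closed under sums and scalar multiples. The crucial fact that a term with strongly
  normalising leaves is strongly normalising follows from a multiset ordering on the
  AC-classes of leaves, combined lexicographically with a weight that the purely algebraic
  rules decrease. Arrows are interpreted as function spaces and \<open>\<forall>\<close> as intersection over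
  all candidates; the fundamental lemma then places every typed term in a candidate.\<close>

lemma ac_equivp: "equivp ac"
  by (rule equivpI) (auto simp: reflp_def symp_def transp_def intro: ac_refl ac_sym ac_trans)

lemma ac_tsize: "ac t r \<Longrightarrow> tsize t = tsize r"
  by (induction rule: ac.induct) auto

text \<open>AC only rearranges sums: below any other head constructor it acts as a congruence.\<close>
fun same_head :: "'s tm \<Rightarrow> 's tm \<Rightarrow> bool" where
  "same_head (Var i) y \<longleftrightarrow> y = Var i"
| "same_head (Lam a) y \<longleftrightarrow> (\<exists>b. y = Lam b \<and> ac a b)"
| "same_head (App a c) y \<longleftrightarrow> (\<exists>b d. y = App b d \<and> ac a b \<and> ac c d)"
| "same_head Zero y \<longleftrightarrow> y = Zero"
| "same_head (Scal s a) y \<longleftrightarrow> (\<exists>b. y = Scal s b \<and> ac a b)"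
| "same_head (Plus a c) y \<longleftrightarrow> True"

lemma same_head_refl: "same_head t t"
  by (cases t) (auto intro: ac_refl)

lemma same_head_trans: "same_head x y \<Longrightarrow> same_head y z \<Longrightarrow> same_head x z"
  by (cases x; cases y) (auto intro: ac_trans)

lemma ac_same_head: "ac x y \<Longrightarrow> same_head x y \<and> same_head y x"
proof (induction rule: ac.induct)
  case (ac_trans t r u)
  then show ?case by (blast intro: same_head_trans)
qed (auto intro: same_head_refl ac_sym)

lemma ac_Var_iff [simp]: "ac (Var i) y \<longleftrightarrow> y = Var i"
  using ac_same_head[of "Var i" y] by (auto intro: ac_refl)

lemma ac_Zero_iff [simp]: "ac Zero y \<longleftrightarrow> y = Zero"
  using ac_same_head[of Zero y] by (auto intro: ac_refl)

lemma ac_Lam_iff [simp]: "ac (Lam a) y \<longleftrightarrow> (\<exists>b. y = Lam b \<and> ac a b)"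
  using ac_same_head[of "Lam a" y] by (auto intro: ac_Lam)

lemma ac_App_iff [simp]: "ac (App a c) y \<longleftrightarrow> (\<exists>b d. y = App b d \<and> ac a b \<and> ac c d)"
  using ac_same_head[of "App a c" y] by (auto intro: ac_App)

section \<open>Reduction without side conditions\<close>

text \<open>Dropping the side conditions "closed normal" only adds reductions, so strong
  normalisation of this relation implies that of \<open>red\<close>.\<close>
abbreviation ured :: "'s::comm_ring_1 tm \<Rightarrow> 's tm \<Rightarrow> bool" where
  "ured \<equiv> step (\<lambda>_. True)"

lemma head_red_mono: "head_red P t r \<Longrightarrow> (\<And>x. P x \<Longrightarrow> Q x) \<Longrightarrow> head_red Q t r"
  by (induction rule: head_red.induct) (blast intro: head_red.intros)+

lemma ctx_red_mono: "ctx_red P t r \<Longrightarrow> (\<And>x. P x \<Longrightarrow> Q x) \<Longrightarrow> ctx_red Q t r"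
  by (induction rule: ctx_red.induct) (blast intro: ctx_red.intros head_red_mono)+

lemma step_mono: "step P t r \<Longrightarrow> (\<And>x. P x \<Longrightarrow> Q x) \<Longrightarrow> step Q t r"
  unfolding step_def by (blast dest: ctx_red_mono)

lemma red_imp_ured: "red t r \<Longrightarrow> ured t r"
  unfolding red_def by (erule step_mono) simp

lemma ac_ured_trans: "ac t t' \<Longrightarrow> ured t' r \<Longrightarrow> ured t r"
  unfolding step_def by (blast intro: ac_trans)

lemma ctx_red_imp_ured: "ctx_red (\<lambda>_. True) t r \<Longrightarrow> ured t r"
  unfolding step_def by (blast intro: ac_refl)

lemma ured_head: "head_red (\<lambda>_. True) t r \<Longrightarrow> ured t r"
  by (rule ctx_red_imp_ured) (rule c_head)

lemma ured_cong:
  assumes "ured t r"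
  shows ured_Lam: "ured (Lam t) (Lam r)"
    and ured_AppL: "ured (App t u) (App r u)"
    and ured_AppR: "ured (App u t) (App u r)"
    and ured_Scal: "ured (Scal a t) (Scal a r)"
    and ured_PlusL: "ured (Plus t u) (Plus r u)"
proof -
  obtain x y where "ac t x" "ctx_red (\<lambda>_. True) x y" "ac y r"
    using assms unfolding step_def by blast
  then show "ured (Lam t) (Lam r)" "ured (App t u) (App r u)" "ured (App u t) (App u r)"
    "ured (Scal a t) (Scal a r)" "ured (Plus t u) (Plus r u)"
    unfolding step_def by (blast intro: ctx_red.intros ac_Lam ac_App ac_Scal ac_Plus ac_refl)+
qed

lemma not_ured_Var: "\<not> ured (Var i) r"
  unfolding step_def by (auto elim: ctx_red.cases head_red.cases)

lemma ured_LamE: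
  assumes "ured (Lam t) r"
  obtains t' where "ured t t'" "ac (Lam t') r"
proof -
  obtain t0 y where "ac t t0" "ctx_red (\<lambda>_. True) (Lam t0) y" "ac y r"
    using assms unfolding step_def by auto
  from this(2) obtain t0' where "ctx_red (\<lambda>_. True) t0 t0'" "y = Lam t0'"
    by cases (auto elim: head_red.cases)
  with \<open>ac t t0\<close> \<open>ac y r\<close> show thesis
    by (blast intro: that ac_ured_trans ctx_red_imp_ured)
qed

lemma ured_AppE [consumes 1, case_names AppL AppR distL distR scalL scalR zeroL zeroR beta]:
  assumes "ured (App t u) r"
  obtains (AppL) t' where "ured t t'" "ac (App t' u) r"
  | (AppR) u' where "ured u u'" "ac (App t u') r"
  | (distL) t1 t2 where "ac t (Plus t1 t2)" "ac (Plus (App t1 u) (App t2 u)) r"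
  | (distR) u1 u2 where "ac u (Plus u1 u2)" "ac (Plus (App t u1) (App t u2)) r"
  | (scalL) a t1 where "ac t (Scal a t1)" "ac (Scal a (App t1 u)) r"
  | (scalR) a u1 where "ac u (Scal a u1)" "ac (Scal a (App t u1)) r"
  | (zeroL) "ac t Zero" "r = Zero"
  | (zeroR) "ac u Zero" "r = Zero"
  | (beta) s b where "ac t (Lam s)" "ac u b" "basis b" "ac (subst s b 0) r"
proof -
  obtain t0 u0 r0 where tu: "ac t t0" "ac u u0" and r0: "ac r0 r"
    and c: "ctx_red (\<lambda>_. True) (App t0 u0) r0"
    using assms unfolding step_def by auto
  have At: "ac (App t v) (App t0 v)" and Au: "ac (App v u) (App v u0)" for v
    using tu by (auto intro: ac_refl)
  from c show thesis
  proof cases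
    case c_head
    then show thesis
    proof cases
      case r_distl
      then show thesis using tu r0 by (auto intro: distL ac_trans[OF ac_Plus[OF Au Au]])
    next
      case r_distr
      then show thesis using tu r0 by (auto intro: distR ac_trans[OF ac_Plus[OF At At]])
    next
      case r_scall
      then show thesis using tu r0 by (auto intro: scalL ac_trans[OF ac_Scal[OF Au]])
    next
      case r_scalr
      then show thesis using tu r0 by (auto intro: scalR ac_trans[OF ac_Scal[OF At]])
    next
      case r_zerol
      then show thesis using tu r0 by (auto intro: zeroL)
    next
      case r_zeror
      then show thesis using tu r0 by (auto intro: zeroR)
    next
      case r_beta
      then show thesis using tu r0 by (auto intro: beta)
    qed
  next
    case (c_AppL t')
    show thesis
    proof (rule AppL)
      show "ured t t'" using tu(1) c_AppL(2) by (rule ac_ured_trans[OF _ ctx_red_imp_ured])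
      show "ac (App t' u) r" using ac_trans[OF Au r0[unfolded c_AppL(1)]] .
    qed
  next
    case (c_AppR u')
    show thesis
    proof (rule AppR)
      show "ured u u'" using tu(2) c_AppR(2) by (rule ac_ured_trans[OF _ ctx_red_imp_ured])
      show "ac (App t u') r" using ac_trans[OF At r0[unfolded c_AppR(1)]] .
    qed
  qed
qed

lemma lift_lift: "i < k + 1 \<Longrightarrow> lift (lift t i) (Suc k) = lift (lift t k) i"
  by (induct t arbitrary: i k) auto

lemma lift_subst_lt: "i < j + 1 \<Longrightarrow> lift (subst t s j) i = subst (lift t i) (lift s i) (j + 1)"
  by (induct t arbitrary: i j s) (auto simp: lift_lift)

lemma lift_subst [simp]:
  "j < i + 1 \<Longrightarrow> lift (subst t s j) i = subst (lift t (i + 1)) (lift s i) j"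
  by (induct t arbitrary: i j s) (simp_all add: diff_Suc lift_lift split: nat.split)

lemma subst_lift [simp]: "subst (lift t k) s k = t"
  by (induct t arbitrary: k s) simp_all

lemma subst_subst:
  "i < j + 1 \<Longrightarrow> subst (subst t (lift v i) (Suc j)) (subst u v j) i = subst (subst t u i) v j"
  by (induct t arbitrary: i j u v)
    (simp_all add: diff_Suc lift_lift [symmetric] lift_subst_lt split: nat.split)

lemma basis_lift: "basis b \<Longrightarrow> basis (lift b k)"
  by (cases b) auto

lemma basis_subst: "basis b \<Longrightarrow> basis s \<Longrightarrow> basis (subst b s k)"
  by (cases b) auto

lemma ac_subst: "ac t r \<Longrightarrow> ac (subst t s k) (subst r s k)"
proof (induction arbitrary: s k rule: ac.induct)
  case (ac_trans t r u)
  then show ?case by (blast intro: ac.ac_trans)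
qed (auto intro: ac.intros)

lemma head_red_subst:
  "head_red (\<lambda>_. True) t r \<Longrightarrow> basis s \<Longrightarrow> head_red (\<lambda>_. True) (subst t s k) (subst r s k)"
proof (induction rule: head_red.induct)
  case (r_beta b t)
  have "subst (subst t b 0) s k = subst (subst t (lift s 0) (Suc k)) (subst b s k) 0"
    using subst_subst[of 0 k t s b] by simp
  then show ?case using r_beta by (simp add: head_red.r_beta basis_subst)
next
  case (r_fact2 t)
  show ?case using head_red.r_fact2[of "\<lambda>_. True" "subst t s k"] by simp
qed (auto intro: head_red.intros)

lemma ured_subst:
  assumes "ured t r" and "basis s"
  shows "ured (subst t s k) (subst r s k)"
proof -
  have "ctx_red (\<lambda>_. True) (subst x s k) (subst y s k)"
    if "ctx_red (\<lambda>_. True) x y" "basis s" for x y s k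
    using that by (induction arbitrary: s k) (auto intro: ctx_red.intros head_red_subst basis_lift)
  then show ?thesis
    using assms unfolding step_def by (blast intro: ac_subst)
qed

definition up :: "(nat \<Rightarrow> 's tm) \<Rightarrow> nat \<Rightarrow> 's tm" where
  "up \<sigma> = case_nat (Var 0) (\<lambda>i. lift (\<sigma> i) 0)"

fun psubst :: "(nat \<Rightarrow> 's tm) \<Rightarrow> 's tm \<Rightarrow> 's tm" where
  "psubst \<sigma> (Var i) = \<sigma> i"
| "psubst \<sigma> (Lam t) = Lam (psubst (up \<sigma>) t)"
| "psubst \<sigma> (App t u) = App (psubst \<sigma> t) (psubst \<sigma> u)"
| "psubst \<sigma> Zero = Zero"
| "psubst \<sigma> (Scal a t) = Scal a (psubst \<sigma> t)"
| "psubst \<sigma> (Plus t u) = Plus (psubst \<sigma> t) (psubst \<sigma> u)"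

lemma psubst_Var: "psubst Var t = t"
proof -
  have up_Var: "up Var = Var"
    by (rule ext) (simp add: up_def split: nat.split)
  show ?thesis
    by (induction t) (simp_all add: up_Var)
qed

lemma subst_psubst: "subst (psubst \<sigma> t) u k = psubst (\<lambda>i. subst (\<sigma> i) u k) t"
proof (induction t arbitrary: \<sigma> u k)
  case (Lam t)
  have "(\<lambda>i. subst (up \<sigma> i) (lift u 0) (Suc k)) = up (\<lambda>i. subst (\<sigma> i) u k)"
    by (rule ext) (simp add: up_def lift_subst_lt split: nat.split)
  then show ?case using Lam by simp
qed auto

lemma subst_psubst_up: "subst (psubst (up \<sigma>) t) u 0 = psubst (case_nat u \<sigma>) t"
proof -
  have "(\<lambda>i. subst (up \<sigma> i) u 0) = case_nat u \<sigma>"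
    by (rule ext) (simp add: up_def split: nat.split)
  then show ?thesis by (simp add: subst_psubst)
qed

abbreviation sn :: "'s::comm_ring_1 tm \<Rightarrow> bool" where
  "sn \<equiv> termip ured"

lemma sn_no_infinite_chain:
  assumes "sn (f 0)"
  shows "\<exists>i. \<not> ured (f i) (f (Suc i))"
  using assms
proof (induction "f 0" arbitrary: f rule: accp_induct_rule)
  case 1
  show ?case
  proof (rule ccontr)
    assume "\<not> ?case"
    then have steps: "\<forall>i. ured (f i) (f (Suc i))" by blast
    then have "\<exists>i. \<not> ured (f (Suc i)) (f (Suc (Suc i)))"
      using 1(2)[of "\<lambda>i. f (Suc i)"] by auto
    with steps show False by blast
  qed
qed

lemma SN_if_sn: "sn t \<Longrightarrow> SN t"
  unfolding SN_def using sn_no_infinite_chain red_imp_ured by blast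

lemma sn_preimage:
  assumes "sn (g t)" and "\<And>t t'. ured t t' \<Longrightarrow> ured (g t) (g t')"
  shows "sn t"
  using assms(1)
proof (induction "g t" arbitrary: t rule: accp_induct_rule)
  case 1
  then show ?case by (blast intro: accpI assms(2))
qed

lemma sn_ac: "sn t \<Longrightarrow> ac t t' \<Longrightarrow> sn t'"
  by (rule accpI) (auto dest: accp_downward intro: ac_ured_trans)

lemma termip_sup_postponable:
  fixes f :: "'a \<Rightarrow> nat"
  assumes "termip R x"
    and decreasing: "\<And>x y. S x y \<Longrightarrow> f y < f x"
    and postpone: "\<And>x y z. S x y \<Longrightarrow> R y z \<Longrightarrow> \<exists>y'. R x y' \<and> S y' z"
  shows "termip (sup R S) x"
proof -
  have lift: "\<exists>x'. R x x' \<and> S\<^sup>*\<^sup>* x' z" if "S\<^sup>*\<^sup>* x y" "R y z" for x y z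
    using that
  proof (induction arbitrary: z rule: converse_rtranclp_induct)
    case (step x x1)
    then obtain x1' where "R x1 x1'" "S\<^sup>*\<^sup>* x1' z" by blast
    with step.hyps(1) show ?case
      by (meson postpone converse_rtranclp_into_rtranclp)
  qed blast
  have "S\<^sup>*\<^sup>* x y \<Longrightarrow> termip (sup R S) y" for y
    using assms(1)
  proof (induction arbitrary: y rule: accp_induct_rule)
    case (1 x)
    show ?case using 1(3)
    proof (induction y rule: measure_induct_rule[of f])
      case (less y)
      show ?case
      proof (rule accpI)
        fix z assume "(sup R S)\<inverse>\<inverse> z y"
        then consider (R_step) "R y z" | (S_step) "S y z" by auto
        then show "termip (sup R S) z"
        proof cases
          case R_step
          then obtain x' where "R x x'" "S\<^sup>*\<^sup>* x' z"
            using lift less.prems by blast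
          then show ?thesis using "1.IH" by blast
        next
          case S_step
          then have "S\<^sup>*\<^sup>* x z"
            using less.prems by (rule rtranclp.rtrancl_into_rtrancl[rotated])
          then show ?thesis using less.IH decreasing S_step by blast
        qed
      qed
    qed
  qed
  from this[OF rtranclp.rtrancl_refl] show ?thesis .
qed

definition part :: "'s tm \<Rightarrow> 's tm \<Rightarrow> bool" where
  "part w v \<longleftrightarrow> (\<exists>u. ac w (Plus v u)) \<or> (\<exists>a. ac w (Scal a v))"

lemma part_PlusL: "part (Plus v u) v" and part_PlusR: "part (Plus u v) v"
  and part_Scal: "part (Scal a v) v"
  unfolding part_def by (blast intro: ac_refl ac_comm)+

lemma ac_Plus_imp_part:
  assumes "ac w (Plus v u)"
  shows "part w v" and "part w u"
  using assms unfolding part_def by (blast intro: ac_trans ac_comm)+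

lemma ac_Scal_imp_part: "ac w (Scal a v) \<Longrightarrow> part w v"
  unfolding part_def by blast

lemma ac_part_trans: "ac w w' \<Longrightarrow> part w' v \<Longrightarrow> part w v"
  unfolding part_def by (blast intro: ac_trans)

lemma part_tsize: "part w v \<Longrightarrow> tsize v < tsize w"
  unfolding part_def by (auto dest: ac_tsize)

lemma part_ured_postpone:
  assumes "part w v" and "ured v v'"
  shows "\<exists>w'. ured w w' \<and> part w' v'"
  using assms unfolding part_def
  by (blast intro: ac_ured_trans ured_PlusL ured_Scal ac_refl)

abbreviation red_or_part :: "'s::comm_ring_1 tm \<Rightarrow> 's tm \<Rightarrow> bool" where
  "red_or_part \<equiv> sup ured part"

lemma parts_imp_red_or_part: "part\<^sup>*\<^sup>* x y \<Longrightarrow> red_or_part\<^sup>*\<^sup>* x y"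
  by (induction rule: rtranclp_induct) (auto intro: rtranclp.rtrancl_into_rtrancl)

lemma sn_imp_termip_part:
  assumes "sn t"
  shows "termip red_or_part t"
  using assms part_tsize part_ured_postpone by (rule termip_sup_postponable)

lemma sn_part: "sn w \<Longrightarrow> part w v \<Longrightarrow> sn v"
  using accp_subset[of "ured\<inverse>\<inverse>" "red_or_part\<inverse>\<inverse>"]
  by (auto dest!: sn_imp_termip_part intro: accp_downward)

lemma sn_parts: "part\<^sup>*\<^sup>* w v \<Longrightarrow> sn w \<Longrightarrow> sn v"
  by (induction rule: rtranclp_induct) (auto intro: sn_part)

section \<open>Sums of strongly normalising terms\<close>

fun leaves :: "'s tm \<Rightarrow> 's tm multiset" where
  "leaves (Plus t u) = leaves t + leaves u"
| "leaves (Scal a t) = leaves t"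
| "leaves Zero = {#}"
| "leaves t = {#t#}"

fun mu :: "'s tm \<Rightarrow> nat" where
  "mu (Plus t u) = mu t + mu u + 2"
| "mu (Scal a t) = 2 * mu t + 1"
| "mu _ = 0"

lemma ac_mu: "ac t r \<Longrightarrow> mu t = mu r"
  by (induction rule: ac.induct) auto

lemma leaf_part: "l \<in># leaves t \<Longrightarrow> part\<^sup>*\<^sup>* t l"
  by (induction t) (auto intro: converse_rtranclp_into_rtranclp part_PlusL part_PlusR part_Scal)

lemma ac_eq_iff: "ac x = ac y \<longleftrightarrow> ac x y"
  using ac_equivp unfolding equivp_def by blast

lemma ac_leaves: "ac x y \<Longrightarrow> image_mset ac (leaves x) = image_mset ac (leaves y)"
proof (induction rule: ac.induct)
  case (ac_Lam t r) then show ?case by (simp add: ac_eq_iff ac.ac_Lam)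
next
  case (ac_App t t' r r') then show ?case by (simp add: ac_eq_iff ac.ac_App)
qed (simp_all add: ac_simps)

lemma ac_leafE:
  assumes "ac x y" "l \<in># leaves y"
  obtains l0 where "l0 \<in># leaves x" "ac l0 l"
proof -
  have "ac l \<in># image_mset ac (leaves x)"
    using assms by (simp add: ac_leaves)
  then obtain l0 where "l0 \<in># leaves x" "ac l = ac l0"
    by auto
  then show thesis
    using that ac_eq_iff ac_sym by blast
qed

lemma part_leafE:
  assumes "part w v" "l \<in># leaves v"
  obtains l0 where "l0 \<in># leaves w" "ac l0 l"
  using assms unfolding part_def by (auto elim: ac_leafE)

text \<open>The weights in \<open>mu\<close> make every rule that does not rewrite a leaf decrease it,
  including \<open>\<alpha>.(t + r) \<rightarrow> \<alpha>.t + \<alpha>.r\<close>.\<close>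
lemma ctx_red_leaves:
  "ctx_red (\<lambda>_. True) w w' \<Longrightarrow>
    (leaves w' \<subseteq># leaves w \<and> mu w' < mu w) \<or>
    (\<exists>l l'. l \<in># leaves w \<and> ured l l' \<and> leaves w' = leaves w - {#l#} + leaves l')"
proof (induction rule: ctx_red.induct)
  case (c_head t r)
  then show ?case
    by cases (use ured_head[OF c_head] in force)+
next
  case (c_Lam t r)
  then show ?case using ured_Lam[OF ctx_red_imp_ured[OF c_Lam(1)]] by force
next
  case (c_AppL t r u)
  then show ?case using ured_AppL[OF ctx_red_imp_ured[OF c_AppL(1)]] by force
next
  case (c_AppR t r u)
  then show ?case using ured_AppR[OF ctx_red_imp_ured[OF c_AppR(1)]] by force
next
  case (c_PlusL t r u)
  from c_PlusL.IH show ?case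
  proof (elim disjE exE conjE)
    fix l l' assume "l \<in># leaves t" "ured l l'" "leaves r = leaves t - {#l#} + leaves l'"
    then show ?case
      by (intro disjI2 exI[of _ l] exI[of _ l']) (auto dest!: multi_member_split)
  qed (simp add: subset_mset.add_right_mono)
next
  case (c_PlusR t r u)
  from c_PlusR.IH show ?case
  proof (elim disjE exE conjE)
    fix l l' assume "l \<in># leaves t" "ured l l'" "leaves r = leaves t - {#l#} + leaves l'"
    then show ?case
      by (intro disjI2 exI[of _ l] exI[of _ l']) (auto dest!: multi_member_split)
  qed (simp add: subset_mset.add_left_mono)
qed simp

text \<open>Leaves are compared up to AC, the class of \<open>l\<close> being represented by the predicate
  \<open>ac l\<close>.\<close>
definition leaf_order :: "(('s::comm_ring_1 tm \<Rightarrow> bool) \<times> ('s tm \<Rightarrow> bool)) set" where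
  "leaf_order = {(ac v, ac l) | l v. sn l \<and> red_or_part\<^sup>+\<^sup>+ l v}"

lemma ac_red_or_part_trans:
  assumes "ac w w'" and "red_or_part w' v"
  shows "red_or_part w v"
  using assms(2) ac_ured_trans[OF assms(1)] ac_part_trans[OF assms(1)] by auto

lemma acc_leaf_order:
  assumes "termip red_or_part l" and "red_or_part\<^sup>*\<^sup>* l v"
  shows "ac v \<in> Wellfounded.acc leaf_order"
  using assms
proof (induction arbitrary: v rule: accp_induct_rule)
  case (1 l)
  have l_acc: "ac l \<in> Wellfounded.acc leaf_order"
  proof (rule accI)
    fix Y assume "(Y, ac l) \<in> leaf_order"
    then have "\<exists>l' v'. Y = ac v' \<and> ac l l' \<and> red_or_part\<^sup>+\<^sup>+ l' v'"
      unfolding leaf_order_def by (auto simp: ac_eq_iff)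
    then obtain l' v' where Y: "Y = ac v'" and "ac l l'" and "red_or_part\<^sup>+\<^sup>+ l' v'"
      by blast
    then obtain y where "red_or_part l' y" "red_or_part\<^sup>*\<^sup>* y v'"
      using tranclpD by metis
    then show "Y \<in> Wellfounded.acc leaf_order"
      unfolding Y using ac_red_or_part_trans[OF \<open>ac l l'\<close>] "1.IH" by blast
  qed
  from "1.prems" show ?case
  proof (cases rule: converse_rtranclpE)
    case base
    then show ?thesis using l_acc by simp
  next
    case (step y)
    then show ?thesis by (rule "1.IH"[OF conversepI])
  qed
qed

lemma wf_leaf_order: "wf leaf_order"
proof -
  have "X \<in> Wellfounded.acc leaf_order" for X
  proof (rule accI)
    fix Y assume "(Y, X) \<in> leaf_order"
    then have "\<exists>l v. Y = ac v \<and> sn l \<and> red_or_part\<^sup>+\<^sup>+ l v"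
      unfolding leaf_order_def by auto
    then obtain l v where "Y = ac v" "sn l" "red_or_part\<^sup>+\<^sup>+ l v"
      by blast
    then show "Y \<in> Wellfounded.acc leaf_order"
      using acc_leaf_order[OF sn_imp_termip_part tranclp_into_rtranclp] by simp
  qed
  then show ?thesis
    by (rule acc_wfI[rule_format])
qed

definition leaf_measure :: "'s::comm_ring_1 tm \<Rightarrow> ('s tm \<Rightarrow> bool) multiset \<times> nat" where
  "leaf_measure w = (image_mset ac (leaves w), mu w)"

lemma ac_leaf_measure: "ac x y \<Longrightarrow> leaf_measure x = leaf_measure y"
  unfolding leaf_measure_def by (simp add: ac_leaves ac_mu)

lemma all_leaves_ac:
  assumes "\<forall>l\<in>#leaves w. C l" "ac w w'" and "\<And>l l'. C l \<Longrightarrow> ac l l' \<Longrightarrow> C l'"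
  shows "\<forall>l\<in>#leaves w'. C l"
  using assms by (blast elim: ac_leafE)

lemma all_leaves_ured:
  assumes "\<forall>l\<in>#leaves w. C l" and "ured w w'"
    and ac_closed: "\<And>l l'. C l \<Longrightarrow> ac l l' \<Longrightarrow> C l'"
    and red_closed: "\<And>l l'. C l \<Longrightarrow> ured l l' \<Longrightarrow> \<forall>x\<in>#leaves l'. C x"
  shows "\<forall>l\<in>#leaves w'. C l"
proof -
  obtain w1 w2 where w: "ac w w1" "ctx_red (\<lambda>_. True) w1 w2" "ac w2 w'"
    using assms(2) unfolding step_def by blast
  have "\<forall>l\<in>#leaves w1. C l"
    using assms(1) w(1) ac_closed by (rule all_leaves_ac)
  with ctx_red_leaves[OF w(2)] have "\<forall>l\<in>#leaves w2. C l"
    using red_closed by (fastforce dest: mset_subset_eqD in_diffD)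
  then show ?thesis
    using w(3) ac_closed by (rule all_leaves_ac)
qed

lemma reduce_leaf_mult:
  assumes "sn l" and "ured l l'"
  shows "(M + image_mset ac (leaves l'), M + {#ac l#}) \<in> mult leaf_order"
proof (rule one_step_implies_mult)
  show "\<forall>k\<in>#image_mset ac (leaves l'). \<exists>j\<in>#{#ac l#}. (k, j) \<in> leaf_order"
  proof
    fix k assume "k \<in># image_mset ac (leaves l')"
    then obtain v where "v \<in># leaves l'" "k = ac v" by auto
    moreover have "red_or_part\<^sup>*\<^sup>* l' v"
      using leaf_part[OF \<open>v \<in># leaves l'\<close>] by (rule parts_imp_red_or_part)
    then have "red_or_part\<^sup>+\<^sup>+ l v"
      using \<open>ured l l'\<close> by (intro rtranclp_into_tranclp2) simp_all
    ultimately show "\<exists>j\<in>#{#ac l#}. (k, j) \<in> leaf_order"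
      unfolding leaf_order_def using \<open>sn l\<close> by auto
  qed
qed simp

lemma ctx_red_leaf_measure:
  assumes leaves_sn: "\<forall>l\<in>#leaves w. sn l" and step: "ctx_red (\<lambda>_. True) w w'"
  shows "(leaf_measure w', leaf_measure w) \<in> mult leaf_order <*lex*> less_than"
    and "\<forall>l\<in>#leaves w'. sn l"
proof -
  from ctx_red_leaves[OF step]
  have "(leaf_measure w', leaf_measure w) \<in> mult leaf_order <*lex*> less_than
    \<and> (\<forall>l\<in>#leaves w'. sn l)"
  proof (elim disjE exE conjE)
    assume sub: "leaves w' \<subseteq># leaves w" and "mu w' < mu w"
    then have "image_mset ac (leaves w') = image_mset ac (leaves w) \<or>
        image_mset ac (leaves w') \<subset># image_mset ac (leaves w)"
      by (metis image_mset_subseteq_mono subset_mset.le_less)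
    with \<open>mu w' < mu w\<close> sub leaves_sn show ?thesis
      unfolding leaf_measure_def by (auto intro: subset_implies_mult dest: mset_subset_eqD)
  next
    fix l l' assume l: "l \<in># leaves w" and "ured l l'"
      and w': "leaves w' = leaves w - {#l#} + leaves l'"
    obtain T where T: "leaves w = add_mset l T"
      using multi_member_split[OF l] by blast
    have "sn l" using leaves_sn l by blast
    then have "sn l'" using \<open>ured l l'\<close> by (blast intro: accp_downward)
    have "(image_mset ac T + image_mset ac (leaves l'), image_mset ac T + {#ac l#}) \<in> mult leaf_order"
      using \<open>sn l\<close> \<open>ured l l'\<close> by (rule reduce_leaf_mult)
    moreover have "\<forall>x\<in>#leaves w'. sn x"
      using w' T leaves_sn \<open>sn l'\<close> by (auto intro: sn_parts leaf_part)
    ultimately show ?thesis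
      unfolding leaf_measure_def using T w' by (simp add: add.commute)
  qed
  then show "(leaf_measure w', leaf_measure w) \<in> mult leaf_order <*lex*> less_than"
    and "\<forall>l\<in>#leaves w'. sn l" by auto
qed

theorem sn_if_leaves_sn: "\<forall>l\<in>#leaves w. sn l \<Longrightarrow> sn w"
proof -
  have "wf (inv_image (mult leaf_order <*lex*> less_than) leaf_measure)"
    by (intro wf_inv_image wf_lex_prod wf_mult wf_leaf_order wf_less_than)
  then show "\<forall>l\<in>#leaves w. sn l \<Longrightarrow> sn w"
  proof (induction w rule: wf_induct_rule)
    case (less w)
    show ?case
    proof (rule accpI)
      fix r assume "ured\<inverse>\<inverse> r w"
      then obtain w1 w2 where w: "ac w w1" "ctx_red (\<lambda>_. True) w1 w2" "ac w2 r"
        unfolding step_def by blast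
      have "\<forall>l\<in>#leaves w1. sn l"
        using less.prems w(1) by (rule all_leaves_ac) (rule sn_ac)
      from ctx_red_leaf_measure[OF this w(2)]
      have "(leaf_measure r, leaf_measure w) \<in> mult leaf_order <*lex*> less_than"
        and "\<forall>l\<in>#leaves r. sn l"
        using w all_leaves_ac[of w2 sn r] sn_ac by (auto simp: ac_leaf_measure)
      then show "sn r"
        using less.IH[of r] by (simp add: conversep_iff[abs_def])
    qed
  qed
qed

section \<open>Reducibility candidates\<close>

definition neutral :: "'s tm \<Rightarrow> bool" where
  "neutral t \<longleftrightarrow> (\<exists>i. t = Var i) \<or> (\<exists>a b. t = App a b)"

locale candidate =
  fixes C :: "'s::comm_ring_1 tm \<Rightarrow> bool"
  assumes cand_sn: "C t \<Longrightarrow> sn t"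
    and cand_red: "C t \<Longrightarrow> ured t r \<Longrightarrow> C r"
    and cand_ac: "C t \<Longrightarrow> ac t t' \<Longrightarrow> C t'"
    and cand_neutral: "neutral t \<Longrightarrow> (\<And>r. ured t r \<Longrightarrow> C r) \<Longrightarrow> C t"
    and cand_leaves: "C t \<longleftrightarrow> (\<forall>l\<in>#leaves t. C l)"
begin

lemma cand_Zero: "C Zero"
  using cand_leaves[of Zero] by simp

lemma cand_Plus: "C (Plus t u) \<longleftrightarrow> C t \<and> C u"
  using cand_leaves[of "Plus t u"] cand_leaves[of t] cand_leaves[of u] by auto

lemma cand_Scal: "C (Scal a t) \<longleftrightarrow> C t"
  using cand_leaves[of "Scal a t"] cand_leaves[of t] by simp

lemma cand_Var: "C (Var i)"
  by (rule cand_neutral) (auto simp: neutral_def not_ured_Var)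

lemma cand_part: "C w \<Longrightarrow> part w v \<Longrightarrow> C v"
  unfolding part_def by (auto dest: cand_ac simp: cand_Plus cand_Scal)

end

lemma candidate_sn: "candidate (sn :: 's::comm_ring_1 tm \<Rightarrow> bool)"
proof
  show "sn t \<Longrightarrow> ured t r \<Longrightarrow> sn r" for t r :: "'s tm"
    by (blast intro: accp_downward)
  show "neutral t \<Longrightarrow> (\<And>r. ured t r \<Longrightarrow> sn r) \<Longrightarrow> sn t" for t :: "'s tm"
    by (blast intro: accpI)
  show "sn t \<longleftrightarrow> (\<forall>l\<in>#leaves t. sn l)" for t :: "'s tm"
    using sn_if_leaves_sn sn_parts leaf_part by blast
qed (auto intro: sn_ac)

definition arr :: "('s::comm_ring_1 tm \<Rightarrow> bool) \<Rightarrow> ('s tm \<Rightarrow> bool) \<Rightarrow> 's tm \<Rightarrow> bool" where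
  "arr A B t \<longleftrightarrow> (\<forall>u. A u \<longrightarrow> B (App t u))"

locale two_candidates = A: candidate A + B: candidate B
  for A B :: "'s::comm_ring_1 tm \<Rightarrow> bool"
begin

lemma arr_sn:
  assumes "arr A B t"
  shows "sn t"
proof -
  have "sn (App t (Var 0))"
    using assms A.cand_Var B.cand_sn unfolding arr_def by blast
  then show ?thesis
    by (rule sn_preimage[where g = "\<lambda>t. App t (Var 0)"]) (rule ured_AppL)
qed

lemma arr_red: "arr A B t \<Longrightarrow> ured t r \<Longrightarrow> arr A B r"
  unfolding arr_def by (blast intro: B.cand_red ured_AppL)

lemma arr_ac: "arr A B t \<Longrightarrow> ac t r \<Longrightarrow> arr A B r"
  unfolding arr_def by (blast intro: B.cand_ac ac_App ac_refl)

lemma arr_ScalD: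
  assumes "arr A B (Scal a t)"
  shows "arr A B t"
  unfolding arr_def
proof (intro allI impI)
  fix u assume "A u"
  then have "B (App (Scal a t) u)"
    using assms unfolding arr_def by blast
  moreover have "ured (App (Scal a t) u) (Scal a (App t u))"
    by (rule ured_head) (rule r_scall, simp)
  ultimately show "B (App t u)"
    using B.cand_red B.cand_Scal by blast
qed

lemma arr_PlusD:
  assumes "arr A B (Plus t t')"
  shows "arr A B t" and "arr A B t'"
proof -
  have "B (App t u) \<and> B (App t' u)" if "A u" for u
  proof -
    have "B (App (Plus t t') u)"
      using assms that unfolding arr_def by blast
    moreover have "ured (App (Plus t t') u) (Plus (App t u) (App t' u))"
      by (rule ured_head) (rule r_distl, simp)
    ultimately show ?thesis
      using B.cand_red B.cand_Plus by blast
  qed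
  then show "arr A B t" and "arr A B t'"
    unfolding arr_def by blast+
qed

lemma arr_leaf: "arr A B t \<Longrightarrow> l \<in># leaves t \<Longrightarrow> arr A B l"
  by (induction t) (auto dest: arr_ScalD arr_PlusD)

text \<open>This lemma carries the neutral, the sum and the abstraction case of the arrow
  candidate alike.\<close>
lemma App_in_B:
  assumes "A u"
    and fun_steps: "\<And>w'. red_or_part w w' \<Longrightarrow> arr A B w'"
    and redex: "\<And>s b. ac w (Lam s) \<Longrightarrow> A b \<Longrightarrow> basis b \<Longrightarrow> B (subst s b 0)"
  shows "B (App w u)"
proof -
  have "termip red_or_part u"
    using \<open>A u\<close> by (blast intro: A.cand_sn sn_imp_termip_part)
  then show ?thesis using \<open>A u\<close>
  proof (induction rule: accp_induct_rule)
    case (1 u)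
    have IH: "B (App w u')" if "red_or_part u u'" for u'
      using 1 that by (auto intro: A.cand_red A.cand_part)
    have fun_part: "B (App w' u)" if "part w w'" for w'
      using fun_steps[of w'] that \<open>A u\<close> unfolding arr_def by simp
    show ?case
    proof (rule B.cand_neutral)
      fix r assume "ured (App w u) r"
      then show "B r"
      proof (cases rule: ured_AppE)
        case (AppL w')
        then show ?thesis
          using fun_steps[of w'] \<open>A u\<close> unfolding arr_def by (auto intro: B.cand_ac)
      next
        case (AppR u')
        then show ?thesis using IH[of u'] by (auto intro: B.cand_ac)
      next
        case (distL w1 w2)
        have "B (App w1 u)" "B (App w2 u)"
          using fun_part ac_Plus_imp_part[OF distL(1)] by blast+
        with distL(2) show ?thesis
          by (blast intro: B.cand_ac B.cand_Plus[THEN iffD2])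
      next
        case (distR u1 u2)
        have "B (App w u1)" "B (App w u2)"
          using IH ac_Plus_imp_part[OF distR(1)] by blast+
        with distR(2) show ?thesis
          by (blast intro: B.cand_ac B.cand_Plus[THEN iffD2])
      next
        case (scalL a w1)
        have "B (App w1 u)"
          using fun_part ac_Scal_imp_part[OF scalL(1)] by blast
        with scalL(2) show ?thesis
          by (blast intro: B.cand_ac B.cand_Scal[THEN iffD2])
      next
        case (scalR a u1)
        have "B (App w u1)"
          using IH ac_Scal_imp_part[OF scalR(1)] by blast
        with scalR(2) show ?thesis
          by (blast intro: B.cand_ac B.cand_Scal[THEN iffD2])
      next
        case (beta s b)
        then show ?thesis
          using \<open>A u\<close> by (blast intro: A.cand_ac B.cand_ac redex)
      qed (simp_all add: B.cand_Zero)
    qed (simp add: neutral_def)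
  qed
qed

lemma arr_neutral:
  assumes "neutral t" and reducts: "\<And>r. ured t r \<Longrightarrow> arr A B r"
  shows "arr A B t"
  unfolding arr_def[of A B t]
proof (intro allI impI)
  fix u assume "A u"
  then show "B (App t u)"
  proof (rule App_in_B)
    show "arr A B w'" if "red_or_part t w'" for w'
      using that \<open>neutral t\<close> reducts by (auto simp: neutral_def part_def)
    show "B (subst s b 0)" if "ac t (Lam s)" for s b
      using that \<open>neutral t\<close> by (auto simp: neutral_def)
  qed
qed

lemma arr_leaves_ured: "arr A B t \<Longrightarrow> ured t r \<Longrightarrow> \<forall>l\<in>#leaves r. arr A B l"
  using arr_red arr_leaf by blast

lemma arr_if_leaves_arr:
  assumes "\<forall>l\<in>#leaves w. arr A B l"
  shows "arr A B w"
proof -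
  have "termip red_or_part w"
    using assms arr_sn by (blast intro: sn_if_leaves_sn sn_imp_termip_part)
  then show ?thesis using assms
  proof (induction rule: accp_induct_rule)
    case (1 w)
    have "arr A B w'" if "red_or_part w w'" for w'
    proof -
      have "\<forall>l\<in>#leaves w'. arr A B l"
        using that
      proof
        assume "ured w w'"
        show ?thesis
          by (rule all_leaves_ured[OF "1.prems" \<open>ured w w'\<close> arr_ac arr_leaves_ured])
      next
        assume "part w w'"
        then show ?thesis
          using "1.prems" by (blast elim: part_leafE intro: arr_ac)
      qed
      with 1 that show ?thesis by simp
    qed
    moreover have "B (subst s b 0)" if redex: "ac w (Lam s)" "A b" "basis b" for s b
    proof -
      obtain l where "l \<in># leaves w" "ac l (Lam s)"
        using ac_leafE[OF redex(1), where l = "Lam s"] by auto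
      then have "B (App (Lam s) b)"
        using "1.prems" redex(2) arr_ac unfolding arr_def by blast
      then show ?thesis
        using redex(3) by (blast intro: B.cand_red ured_head r_beta)
    qed
    ultimately show ?case
      unfolding arr_def[of A B w] by (blast intro: App_in_B)
  qed
qed

lemma arr_Lam:
  assumes "\<And>u. A u \<Longrightarrow> basis u \<Longrightarrow> B (subst t u 0)"
  shows "arr A B (Lam t)"
proof -
  have "sn (subst t (Var 0) 0)"
    using assms A.cand_Var B.cand_sn by simp
  then have "sn t"
    by (rule sn_preimage) (simp add: ured_subst)
  then show ?thesis using assms
  proof (induction rule: accp_induct_rule)
    case (1 t)
    have "arr A B w'" if "red_or_part (Lam t) w'" for w'
    proof -
      from that have "ured (Lam t) w'"
        by (auto simp: part_def)
      then obtain t' where "ured t t'" "ac (Lam t') w'"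
        by (rule ured_LamE)
      moreover have "B (subst t' u 0)" if "A u" "basis u" for u
        using "1.prems"[OF that] ured_subst[OF \<open>ured t t'\<close> that(2)] by (rule B.cand_red)
      ultimately show ?thesis
        using "1.IH" by (blast intro: arr_ac)
    qed
    moreover have "B (subst s b 0)" if "ac (Lam t) (Lam s)" "A b" "basis b" for s b
      using that "1.prems" by (auto intro: B.cand_ac ac_subst)
    ultimately show ?case
      unfolding arr_def[of A B "Lam t"] by (blast intro: App_in_B)
  qed
qed

lemma candidate_arr: "candidate (arr A B)"
proof
  show "arr A B t \<longleftrightarrow> (\<forall>l\<in>#leaves t. arr A B l)" for t
    using arr_leaf arr_if_leaves_arr by blast
qed (auto intro: arr_sn arr_red arr_ac arr_neutral)

end

section \<open>The candidate interpretation of types\<close>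

definition shift :: "(nat \<Rightarrow> 'a) \<Rightarrow> nat \<Rightarrow> 'a \<Rightarrow> nat \<Rightarrow> 'a" where
  "shift \<rho> k X = (\<lambda>i. if i < k then \<rho> i else if i = k then X else \<rho> (i - 1))"

fun interp :: "(nat \<Rightarrow> 's::comm_ring_1 tm \<Rightarrow> bool) \<Rightarrow> ty \<Rightarrow> 's tm \<Rightarrow> bool" where
  "interp \<rho> (TVar i) = \<rho> i"
| "interp \<rho> (Arr A B) = arr (interp \<rho> A) (interp \<rho> B)"
| "interp \<rho> (All A) = (\<lambda>t. \<forall>C. candidate C \<longrightarrow> interp (shift \<rho> 0 C) A t)"

lemma shift_shift: "shift (shift \<rho> 0 C) (Suc k) X = shift (shift \<rho> k X) 0 C"
proof
  show "shift (shift \<rho> 0 C) (Suc k) X i = shift (shift \<rho> k X) 0 C i" for i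
    by (cases i) (simp_all add: shift_def)
qed

lemma interp_liftT: "interp (shift \<rho> k X) (liftT k A) = interp \<rho> A"
proof (induction A arbitrary: \<rho> k)
  case (All A)
  then show ?case by (simp add: shift_shift[symmetric])
qed (simp_all add: shift_def)

lemma interp_substT: "interp \<rho> (substT A k B) = interp (shift \<rho> k (interp \<rho> B)) A"
proof (induction A arbitrary: \<rho> k B)
  case (All A)
  then show ?case by (simp add: shift_shift interp_liftT[of _ 0])
qed (simp_all add: shift_def)

lemma candidate_Inter:
  fixes F :: "('s::comm_ring_1 tm \<Rightarrow> bool) \<Rightarrow> 's tm \<Rightarrow> bool"
  assumes cand: "\<And>C. candidate C \<Longrightarrow> candidate (F C)"
  shows "candidate (\<lambda>t. \<forall>C. candidate C \<longrightarrow> F C t)"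
proof
  fix t assume "\<forall>C. candidate C \<longrightarrow> F C t"
  then show "sn t"
    using candidate_sn candidate.cand_sn[OF cand[OF candidate_sn]] by blast
next
  fix t r assume "\<forall>C. candidate C \<longrightarrow> F C t" "ured t r"
  then show "\<forall>C. candidate C \<longrightarrow> F C r"
    using cand candidate.cand_red by blast
next
  fix t t' assume "\<forall>C. candidate C \<longrightarrow> F C t" "ac t t'"
  then show "\<forall>C. candidate C \<longrightarrow> F C t'"
    using cand candidate.cand_ac by blast
next
  fix t assume "neutral t" and reducts: "\<And>r. ured t r \<Longrightarrow> \<forall>C. candidate C \<longrightarrow> F C r"
  show "\<forall>C. candidate C \<longrightarrow> F C t"
  proof (intro allI impI)
    fix C :: "'s tm \<Rightarrow> bool" assume "candidate C"
    then show "F C t"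
      using candidate.cand_neutral[OF cand \<open>neutral t\<close>] reducts by blast
  qed
next
  fix t
  have "F C t \<longleftrightarrow> (\<forall>l\<in>#leaves t. F C l)" if "candidate C" for C :: "'s tm \<Rightarrow> bool"
    using cand[OF that] by (rule candidate.cand_leaves)
  then show "(\<forall>C. candidate C \<longrightarrow> F C t) \<longleftrightarrow> (\<forall>l\<in>#leaves t. \<forall>C. candidate C \<longrightarrow> F C l)"
    by blast
qed

lemma candidate_shift: "candidate C \<Longrightarrow> \<forall>i. candidate (\<rho> i) \<Longrightarrow> \<forall>i. candidate (shift \<rho> k C i)"
  by (simp add: shift_def)

lemma candidate_interp: "\<forall>i. candidate (\<rho> i) \<Longrightarrow> candidate (interp \<rho> A)"
proof (induction A arbitrary: \<rho>)
  case (Arr A B)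
  then interpret two_candidates "interp \<rho> A" "interp \<rho> B"
    by (simp add: two_candidates_def)
  show ?case by (simp add: candidate_arr)
next
  case (All A)
  then show ?case
    by (simp add: candidate_Inter candidate_shift)
qed simp

theorem fundamental:
  assumes "typing \<Gamma> t A" and "\<forall>i. candidate (\<rho> i)"
    and "\<forall>i<length \<Gamma>. interp \<rho> (\<Gamma> ! i) (\<sigma> i)"
  shows "interp \<rho> A (psubst \<sigma> (t :: 's::comm_ring_1 tm))"
  using assms
proof (induction arbitrary: \<rho> \<sigma> rule: typing.induct)
  case (t_lam A \<Gamma> t B)
  interpret two_candidates "interp \<rho> A" "interp \<rho> B"
    using t_lam.prems(1) by (simp add: two_candidates_def candidate_interp)
  have "interp \<rho> B (subst (psubst (up \<sigma>) t) u 0)" if "interp \<rho> A u" for u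
  proof -
    have "\<forall>i<length (A # \<Gamma>). interp \<rho> ((A # \<Gamma>) ! i) (case_nat u \<sigma> i)"
      using t_lam.prems(2) that by (auto simp: nth_Cons split: nat.split)
    then show ?thesis
      using t_lam.IH t_lam.prems(1) by (simp add: subst_psubst_up)
  qed
  then show ?case
    by (simp add: arr_Lam)
next
  case (t_app \<Gamma> t A B r)
  then show ?case unfolding interp.simps arr_def by simp
next
  case (t_allE \<Gamma> t A B)
  have "candidate (interp \<rho> B)"
    using t_allE.prems(1) by (rule candidate_interp)
  then have "interp (shift \<rho> 0 (interp \<rho> B)) A (psubst \<sigma> t)"
    using t_allE by simp
  then show ?case
    by (simp add: interp_substT)
next
  case (t_allI \<Gamma> t A)
  show ?case unfolding interp.simps
  proof (intro allI impI)
    fix C :: "'s tm \<Rightarrow> bool" assume "candidate C"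
    then show "interp (shift \<rho> 0 C) A (psubst \<sigma> t)"
      using t_allI.prems by (intro t_allI.IH) (simp_all add: candidate_shift interp_liftT)
  qed
next
  case (t_zero \<Gamma> A)
  show ?case
    using candidate_interp[OF t_zero.prems(1)] by (simp add: candidate.cand_Zero)
next
  case (t_plus \<Gamma> t A r)
  then show ?case
    using candidate.cand_Plus[OF candidate_interp[OF t_plus.prems(1)]] by simp
next
  case (t_scal \<Gamma> t A a)
  then show ?case
    using candidate.cand_Scal[OF candidate_interp[OF t_scal.prems(1)]] by simp
qed simp

theorem mainTheorem3:
  fixes \<Gamma> :: "ty list" and t :: "'s::comm_ring_1 tm" and A :: ty
  assumes "typing \<Gamma> t A"
  shows "SN t"
proof -
  let ?\<rho> = "\<lambda>_::nat. sn :: 's tm \<Rightarrow> bool"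
  have cands: "\<forall>i. candidate (?\<rho> i)"
    using candidate_sn by simp
  then have "\<forall>i<length \<Gamma>. interp ?\<rho> (\<Gamma> ! i) (Var i)"
    using candidate.cand_Var[OF candidate_interp[OF cands]] by blast
  with assms cands have "interp ?\<rho> A (psubst Var t)"
    by (rule fundamental)
  then have "sn t"
    using candidate.cand_sn[OF candidate_interp[OF cands]] by (simp add: psubst_Var)
  then show ?thesis
    by (rule SN_if_sn)
qed

end
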